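(* Let $G$ be a connected graph of order at least three. Then $\gamma_{cI}(G)=2\beta(G)$ if and only if $G\in\mathcal{G}$.
   Context: All graphs are finite and simple; $N(v)$ is the open neighborhood of $v$. A leaf is a vertex of degree one. $\beta(G)$ is the vertex cover number (minimum size of a set containing at least one endpoint of every edge). For $f:V(G)\to\{0,1,2\}$ let $V_i=\{v: f(v)=i\}$ and $\omega(f)=\sum_v f(v)$. A covering Italian dominating function (CID function) of $G$ is an $f:V(G)\to\{0,1,2\}$ such that every vertex $v$ with $f(v)=0$ satisfies $\sum_{u\in N(v)}f(u)\ge 2$, and $V_0$ is an independent set. $\gamma_{cI}(G)$ is the minimum of $\omega(f)$ over all CID functions of $G$. The family $\mathcal{G}$: a graph $G$ belongs to $\mathcal{G}$ if it is constructed from a graph $H$ (an induced subgraph of $G$) as follows: $S=V(G)\setminus V(H)$ is an independent set of $G$; every vertex of $H$ is joined to at least two vertices of $S$, at least one of which is a leaf of $G$; and for every $k\ge1$, any $k$ independent vertices of $H$, chosen among those vertices of $H$ adjacent to exactly one leaf in $S$, have (together) at least $k$ non-leaf (independent) neighbors in $S$. *)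

theory Defs
  imports Main
begin

definition graph :: "'a set \<Rightarrow> ('a \<Rightarrow> 'a \<Rightarrow> bool) \<Rightarrow> bool" where
  "graph V E \<longleftrightarrow> finite V \<and> (\<forall>x y. E x y \<longrightarrow> x \<in> V \<and> y \<in> V)
     \<and> (\<forall>x y. E x y \<longrightarrow> E y x) \<and> (\<forall>x. \<not> E x x)"

definition connected_graph :: "'a set \<Rightarrow> ('a \<Rightarrow> 'a \<Rightarrow> bool) \<Rightarrow> bool" where
  "connected_graph V E \<longleftrightarrow> (\<forall>x\<in>V. \<forall>y\<in>V. E\<^sup>*\<^sup>* x y)"

definition nbhd :: "'a set \<Rightarrow> ('a \<Rightarrow> 'a \<Rightarrow> bool) \<Rightarrow> 'a \<Rightarrow> 'a set" where
  "nbhd V E v = {u \<in> V. E v u}"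

definition leaf :: "'a set \<Rightarrow> ('a \<Rightarrow> 'a \<Rightarrow> bool) \<Rightarrow> 'a \<Rightarrow> bool" where
  "leaf V E v \<longleftrightarrow> v \<in> V \<and> card (nbhd V E v) = 1"

definition independent :: "('a \<Rightarrow> 'a \<Rightarrow> bool) \<Rightarrow> 'a set \<Rightarrow> bool" where
  "independent E A \<longleftrightarrow> (\<forall>x\<in>A. \<forall>y\<in>A. \<not> E x y)"

definition vertex_cover :: "'a set \<Rightarrow> ('a \<Rightarrow> 'a \<Rightarrow> bool) \<Rightarrow> 'a set \<Rightarrow> bool" where
  "vertex_cover V E C \<longleftrightarrow> C \<subseteq> V \<and> (\<forall>x y. E x y \<longrightarrow> x \<in> C \<or> y \<in> C)"

definition vc_number :: "'a set \<Rightarrow> ('a \<Rightarrow> 'a \<Rightarrow> bool) \<Rightarrow> nat" where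
  "vc_number V E = Min (card ` {C. vertex_cover V E C})"

text \<open>Covering Italian dominating function f : V \<rightarrow> {0,1,2} (values outside V irrelevant).\<close>
definition is_CID :: "'a set \<Rightarrow> ('a \<Rightarrow> 'a \<Rightarrow> bool) \<Rightarrow> ('a \<Rightarrow> nat) \<Rightarrow> bool" where
  "is_CID V E f \<longleftrightarrow> (\<forall>v\<in>V. f v \<le> 2)
     \<and> (\<forall>v\<in>V. f v = 0 \<longrightarrow> sum f (nbhd V E v) \<ge> 2)
     \<and> independent E {v \<in> V. f v = 0}"

definition gamma_cI :: "'a set \<Rightarrow> ('a \<Rightarrow> 'a \<Rightarrow> bool) \<Rightarrow> nat" where
  "gamma_cI V E = Min {sum f V | f. is_CID V E f}"

text \<open>Membership in the family \<G>.  H is the vertex set of the induced subgraph,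
  S = V - H.\<close>
definition in_family_G :: "'a set \<Rightarrow> ('a \<Rightarrow> 'a \<Rightarrow> bool) \<Rightarrow> bool" where
  "in_family_G V E \<longleftrightarrow> (\<exists>H \<subseteq> V.
     let S = V - H;
         H1 = {h \<in> H. card {s \<in> S. E h s \<and> leaf V E s} = 1}
     in independent E S
      \<and> (\<forall>h\<in>H. card {s \<in> S. E h s} \<ge> 2 \<and> (\<exists>s\<in>S. E h s \<and> leaf V E s))
      \<and> (\<forall>I \<subseteq> H1. I \<noteq> {} \<and> independent E I \<longrightarrow>
            card {s \<in> S. \<not> leaf V E s \<and> (\<exists>h\<in>I. E h s)} \<ge> card I))"

end

theory Submission
  imports Defs
begin

(* The CID function that is 2 on a minimum vertex cover and 0 elsewhere gives gamma_cI <= 2 beta.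

   If G is in the family with witness H, then H is a minimum vertex cover, since every vertex of H
   owns a private pendant leaf.  Charge each h in H with the weight of f on h and on its pendant
   leaves.  The charge is at least 2 except on an independent set I of vertices with f = 0 and a
   single pendant leaf, which are charged at least 1; the Hall-type condition provides |I| further
   non-leaf neighbours of I, each of weight at least 1 as a neighbour of a 0-vertex.  Hence every
   CID function weighs at least 2 |H| = 2 beta.

   Conversely, let gamma_cI = 2 beta and let C be a minimum vertex cover; we show that H = C
   witnesses membership in the family.  A violation of any defining property yields a set X inside
   C and a set Y outside C - X with |Y| < 2 |X| such that the function that is 2 on C - X and 1 on Y
   is still a CID function, which is lighter than 2 |C|.  Only the degenerate case of a vertex of C
   whose sole neighbour is a leaf escapes this exchange, and it is excluded by connectivity and
   order at least three. *)

lemma connected_graph_closed_superset: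
  assumes "connected_graph V E" "x \<in> V" "x \<in> K" "\<And>y z. y \<in> K \<Longrightarrow> E y z \<Longrightarrow> z \<in> K"
  shows "V \<subseteq> K"
proof
  fix v assume "v \<in> V"
  then have "E\<^sup>*\<^sup>* x v" using assms(1,2) unfolding connected_graph_def by blast
  then show "v \<in> K" by (induction rule: rtranclp_induct) (auto intro: assms(3,4))
qed

lemma connected_graph_no_isolated:
  assumes "connected_graph V E" "card V \<ge> 3" "v \<in> V"
  shows "\<exists>u. E v u"
proof (rule ccontr)
  assume "\<nexists>u. E v u"
  then have "V \<subseteq> {v}" using connected_graph_closed_superset[OF assms(1,3), of "{v}"] by auto
  then have "card V \<le> 1" using card_mono[of "{v}" V] by simp
  then show False using assms(2) by simp
qed

definition two_one :: "'a set \<Rightarrow> 'a set \<Rightarrow> 'a \<Rightarrow> nat" where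
  "two_one A B v = (if v \<in> A then 2 else if v \<in> B then 1 else 0)"

lemma sum_two_one:
  assumes "finite V" "A \<subseteq> V" "B \<subseteq> V" "A \<inter> B = {}"
  shows "sum (two_one A B) V = 2 * card A + card B"
proof -
  have "sum (two_one A B) V = (\<Sum>v\<in>V. (if v \<in> A then 2 else 0) + (if v \<in> B then 1 else 0))"
    using assms(4) unfolding two_one_def by (intro sum.cong) auto
  also have "\<dots> = 2 * card A + card B"
    using assms(1-3) by (simp add: sum.distrib sum.If_cases Int_absorb1)
  finally show ?thesis .
qed

lemma is_CID_two_one:
  assumes "\<And>v. v \<in> V \<Longrightarrow> v \<notin> A \<Longrightarrow> v \<notin> B \<Longrightarrow> 2 \<le> sum (two_one A B) (nbhd V E v)"
    and "independent E (V - A - B)"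
  shows "is_CID V E (two_one A B)"
proof -
  have "{v \<in> V. two_one A B v = 0} = V - A - B" unfolding two_one_def by auto
  then show ?thesis using assms unfolding is_CID_def two_one_def by auto
qed

locale simple_graph =
  fixes V :: "'a set" and E :: "'a \<Rightarrow> 'a \<Rightarrow> bool"
  assumes graph: "graph V E"
begin

lemma finite_V: "finite V"
  using graph unfolding graph_def by blast

lemma edge_in_V:
  assumes "E x y" shows "x \<in> V" "y \<in> V"
  using graph assms unfolding graph_def by blast+

lemma edge_sym: "E x y \<Longrightarrow> E y x"
  using graph unfolding graph_def by blast

lemma edge_irrefl: "\<not> E x x"
  using graph unfolding graph_def by blast

lemma mem_nbhd_iff [simp]: "u \<in> nbhd V E v \<longleftrightarrow> E v u"
  unfolding nbhd_def using edge_in_V by blast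

lemma finite_nbhd: "finite (nbhd V E v)"
  unfolding nbhd_def using finite_V by simp

lemma leaf_nbhd:
  assumes "leaf V E s" "E s h"
  shows "nbhd V E s = {h}"
proof -
  obtain x where "nbhd V E s = {x}"
    using assms(1) unfolding leaf_def by (metis card_1_singletonE)
  moreover have "h \<in> nbhd V E s" using assms(2) by simp
  ultimately show ?thesis by (metis singletonD)
qed

lemma leaf_unique_nbr: "leaf V E s \<Longrightarrow> E s h \<Longrightarrow> E s h' \<Longrightarrow> h' = h"
  using leaf_nbhd by fastforce

lemma not_leaf_other_nbr:
  assumes "v \<in> V" "\<not> leaf V E v" "E v u"
  shows "\<exists>u'. E v u' \<and> u' \<noteq> u"
proof (rule ccontr)
  assume "\<nexists>u'. E v u' \<and> u' \<noteq> u"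
  then have "nbhd V E v = {u}" using assms(3) by (intro set_eqI) (metis mem_nbhd_iff singleton_iff)
  then show False using assms(1,2) unfolding leaf_def by simp
qed

lemma connected_isolated_edge_card_le_2:
  assumes conn: "connected_graph V E" and hs: "E h s"
    and nbr_h: "\<And>y. E h y \<Longrightarrow> y = s" and nbr_s: "\<And>y. E s y \<Longrightarrow> y = h"
  shows "card V \<le> 2"
proof -
  have "V \<subseteq> {h, s}"
  proof (rule connected_graph_closed_superset[OF conn])
    show "h \<in> V" "h \<in> {h, s}" using edge_in_V(1)[OF hs] by simp_all
    fix y z assume "y \<in> {h, s}" "E y z"
    then show "z \<in> {h, s}" using nbr_h[of z] nbr_s[of z] by auto
  qed
  then have "card V \<le> card {h, s}" by (intro card_mono) simp_all
  also have "\<dots> \<le> 2" by (simp add: card_insert_if)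
  finally show ?thesis .
qed

lemma member_le_nbhd_sum: "E v u \<Longrightarrow> (f :: 'a \<Rightarrow> nat) u \<le> sum f (nbhd V E v)"
  by (simp add: finite_nbhd member_le_sum)

lemma pair_le_nbhd_sum:
  assumes "E v u" "E v u'" "u \<noteq> u'"
  shows "f u + f u' \<le> sum (f :: 'a \<Rightarrow> nat) (nbhd V E v)"
proof -
  have "sum f {u, u'} \<le> sum f (nbhd V E v)"
    using assms by (intro sum_mono2 finite_nbhd) auto
  then show ?thesis using assms(3) by simp
qed

lemma two_one_nbhd_ge:
  "E v u \<Longrightarrow> u \<in> A \<Longrightarrow> 2 \<le> sum (two_one A B) (nbhd V E v)"
  using member_le_nbhd_sum[of v u "two_one A B"] unfolding two_one_def by auto

lemma two_one_nbhd_ge_pair: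
  "E v u \<Longrightarrow> E v u' \<Longrightarrow> u \<noteq> u' \<Longrightarrow> u \<in> A \<union> B \<Longrightarrow> u' \<in> A \<union> B
    \<Longrightarrow> 2 \<le> sum (two_one A B) (nbhd V E v)"
  using pair_le_nbhd_sum[of v u u' "two_one A B"] unfolding two_one_def by (auto split: if_splits)

lemma is_CID_nbr_of_zero:
  assumes "is_CID V E f" "E x y" "f x = 0"
  shows "1 \<le> f y"
proof (rule ccontr)
  assume "\<not> 1 \<le> f y"
  then have "x \<in> {v \<in> V. f v = 0}" "y \<in> {v \<in> V. f v = 0}"
    using assms(2,3) edge_in_V by auto
  then show False using assms(1,2) unfolding is_CID_def independent_def by blast
qed

lemma gamma_cI_attained: "\<exists>f. is_CID V E f \<and> sum f V = gamma_cI V E"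
  and gamma_cI_le: "is_CID V E f \<Longrightarrow> gamma_cI V E \<le> sum f V"
proof -
  let ?W = "{sum f V | f. is_CID V E f}"
  have "?W \<subseteq> {..2 * card V}"
  proof
    fix w assume "w \<in> ?W"
    then obtain g where g: "is_CID V E g" "w = sum g V" by blast
    then have "\<forall>v\<in>V. g v \<le> 2" unfolding is_CID_def by blast
    then have "w \<le> sum (\<lambda>_. 2) V" using g(2) sum_mono[of V g "\<lambda>_. 2"] by simp
    then show "w \<in> {..2 * card V}" by simp
  qed
  then have fin: "finite ?W" by (rule finite_subset) simp
  have "is_CID V E (\<lambda>_. 2)" unfolding is_CID_def independent_def by simp
  then have "?W \<noteq> {}" by blast
  with fin have "gamma_cI V E \<in> ?W" unfolding gamma_cI_def by (rule Min_in)
  then show "\<exists>f. is_CID V E f \<and> sum f V = gamma_cI V E" unfolding mem_Collect_eq by metis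
  show "is_CID V E f \<Longrightarrow> gamma_cI V E \<le> sum f V"
    unfolding gamma_cI_def using fin by (intro Min_le) blast+
qed

lemma vc_number_attained: "\<exists>C. vertex_cover V E C \<and> card C = vc_number V E"
  and vc_number_le: "vertex_cover V E C \<Longrightarrow> vc_number V E \<le> card C"
proof -
  let ?K = "card ` {C. vertex_cover V E C}"
  have "{C. vertex_cover V E C} \<subseteq> Pow V" unfolding vertex_cover_def by blast
  then have fin: "finite ?K" using finite_V by (meson finite_Pow_iff finite_imageI finite_subset)
  have "vertex_cover V E V" unfolding vertex_cover_def using edge_in_V by blast
  then have "?K \<noteq> {}" by blast
  with fin have "vc_number V E \<in> ?K" unfolding vc_number_def by (rule Min_in)
  then show "\<exists>C. vertex_cover V E C \<and> card C = vc_number V E" by (metis imageE mem_Collect_eq)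
  show "vertex_cover V E C \<Longrightarrow> vc_number V E \<le> card C"
    unfolding vc_number_def using fin by (intro Min_le) blast+
qed

lemma independent_compl_cover: "vertex_cover V E C \<Longrightarrow> independent E (V - C)"
  unfolding vertex_cover_def independent_def by blast

lemma independent_swap:
  assumes "vertex_cover V E C" "X \<subseteq> C" "independent E X"
    and "\<And>x y. x \<in> X \<Longrightarrow> E x y \<Longrightarrow> y \<notin> C \<Longrightarrow> y \<in> Y"
  shows "independent E (V - (C - X) - Y)"
  unfolding independent_def
proof (intro ballI notI)
  fix x y assume x: "x \<in> V - (C - X) - Y" and y: "y \<in> V - (C - X) - Y" and xy: "E x y"
  have "x \<in> C \<or> y \<in> C" using assms(1) xy unfolding vertex_cover_def by blast
  then consider "x \<in> X" "y \<in> X" | "x \<in> X" "y \<notin> C" | "y \<in> X" "x \<notin> C"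
    using x y by blast
  then show False
  proof cases
    case 1
    then show False using assms(3) xy unfolding independent_def by blast
  next
    case 2
    then show False using assms(4) xy y by blast
  next
    case 3
    then show False using assms(4) edge_sym[OF xy] x by blast
  qed
qed

definition pendants :: "'a set \<Rightarrow> 'a \<Rightarrow> 'a set" where
  "pendants H h = {s \<in> V - H. E h s \<and> leaf V E s}"

lemma pendants_disjoint: "h \<noteq> h' \<Longrightarrow> pendants H h \<inter> pendants H h' = {}"
  unfolding pendants_def using leaf_unique_nbr edge_sym by blast

lemma finite_pendants: "finite (pendants H h)"
  unfolding pendants_def using finite_V by simp

lemma card_outer_nbrs_le:
  assumes finI: "finite I" and single: "\<And>h. h \<in> I \<Longrightarrow> card (pendants C h) = 1"
  shows "card {s \<in> V - C. \<exists>h\<in>I. E h s}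
    \<le> card I + card {s \<in> V - C. \<not> leaf V E s \<and> (\<exists>h\<in>I. E h s)}"
    (is "card ?NS \<le> card I + card ?N")
proof -
  have "finite ((\<Union>h\<in>I. pendants C h) \<union> ?N)"
    using finI finite_pendants finite_V by simp
  moreover have "?NS \<subseteq> (\<Union>h\<in>I. pendants C h) \<union> ?N" unfolding pendants_def by blast
  ultimately have "card ?NS \<le> card ((\<Union>h\<in>I. pendants C h) \<union> ?N)" by (rule card_mono)
  also have "\<dots> \<le> card (\<Union>h\<in>I. pendants C h) + card ?N" by (rule card_Un_le)
  also have "card (\<Union>h\<in>I. pendants C h) \<le> (\<Sum>h\<in>I. card (pendants C h))"
    by (rule card_UN_le[OF finI])
  also have "(\<Sum>h\<in>I. card (pendants C h)) = card I"
    using single by simp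
  finally show ?thesis by simp
qed

definition pendant_hall :: "'a set \<Rightarrow> bool" where
  "pendant_hall H \<longleftrightarrow> (\<forall>I \<subseteq> {h \<in> H. card (pendants H h) = 1}. I \<noteq> {} \<and> independent E I \<longrightarrow>
     card I \<le> card {s \<in> V - H. \<not> leaf V E s \<and> (\<exists>h\<in>I. E h s)})"

lemma in_family_G_iff:
  "in_family_G V E \<longleftrightarrow> (\<exists>H \<subseteq> V. independent E (V - H)
     \<and> (\<forall>h\<in>H. 2 \<le> card {s \<in> V - H. E h s} \<and> pendants H h \<noteq> {}) \<and> pendant_hall H)"
proof -
  have "(\<exists>s\<in>V - H. E h s \<and> leaf V E s) \<longleftrightarrow> pendants H h \<noteq> {}" for H h
    unfolding pendants_def by blast
  then show ?thesis
    unfolding in_family_G_def Let_def pendant_hall_def pendants_def[symmetric] by simp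
qed

context
  fixes H :: "'a set"
  assumes H_sub: "H \<subseteq> V"
    and independent_compl: "independent E (V - H)"
    and has_pendant: "\<And>h. h \<in> H \<Longrightarrow> pendants H h \<noteq> {}"
begin

lemma vc_number_eq_card: "vc_number V E = card H"
proof (rule antisym)
  have "vertex_cover V E H"
    using H_sub independent_compl edge_in_V unfolding vertex_cover_def independent_def by blast
  then show "vc_number V E \<le> card H" by (rule vc_number_le)
  obtain C where C: "vertex_cover V E C" "card C = vc_number V E"
    using vc_number_attained by blast
  have "\<forall>h\<in>H. \<exists>s. s \<in> pendants H h" using has_pendant by blast
  then obtain p where p: "\<And>h. h \<in> H \<Longrightarrow> p h \<in> pendants H h" by metis
  define g where "g h = (if h \<in> C then h else p h)" for h
  have "g ` H \<subseteq> C"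
    using C(1) p unfolding g_def pendants_def vertex_cover_def by auto
  \<comment> \<open>g is injective because pendant leaves are private\<close>
  moreover have "inj_on g H"
  proof (rule inj_onI)
    fix a b assume ab: "a \<in> H" "b \<in> H" "g a = g b"
    have "p a \<notin> H" "p b \<notin> H" using p ab(1,2) unfolding pendants_def by auto
    then show "a = b"
      using ab pendants_disjoint[of a b H] p[OF ab(1)] p[OF ab(2)] unfolding g_def
      by (auto split: if_splits)
  qed
  moreover have "finite C" using C(1) finite_V finite_subset unfolding vertex_cover_def by blast
  ultimately show "card H \<le> vc_number V E" using C(2) card_inj_on_le by metis
qed

lemma light_pendant_charge:
  assumes f: "is_CID V E f" and h: "h \<in> H" and light: "f h + sum f (pendants H h) < 2"
  shows "f h = 0" and "card (pendants H h) = 1" and "1 \<le> sum f (pendants H h)"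
proof -
  obtain s where s: "s \<in> pendants H h" using has_pendant[OF h] by blast
  then have s_leaf: "s \<in> V" "E h s" "leaf V E s" unfolding pendants_def by auto
  show f0: "f h = 0"
  proof (rule ccontr)
    assume "f h \<noteq> 0"
    have "f s \<le> sum f (pendants H h)" by (rule member_le_sum[OF s _ finite_pendants]) simp
    with light \<open>f h \<noteq> 0\<close> have "f s = 0" "f h < 2" by auto
    moreover have "sum f (nbhd V E s) = f h"
      using leaf_nbhd[OF s_leaf(3) edge_sym[OF s_leaf(2)]] by simp
    ultimately show False using f s_leaf(1) unfolding is_CID_def by auto
  qed
  have "\<And>s'. s' \<in> pendants H h \<Longrightarrow> 1 \<le> f s'"
    using is_CID_nbr_of_zero[OF f _ f0] unfolding pendants_def by blast
  then have "card (pendants H h) \<le> sum f (pendants H h)"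
    using sum_mono[of "pendants H h" "\<lambda>_. 1" f] by simp
  moreover have "card (pendants H h) \<noteq> 0" using s finite_pendants by auto
  ultimately show "card (pendants H h) = 1" "1 \<le> sum f (pendants H h)"
    using light f0 by linarith+
qed

lemma sum_charges_le:
  assumes "N \<subseteq> {s \<in> V - H. \<not> leaf V E s}"
  shows "(\<Sum>h\<in>H. f h + sum f (pendants H h)) + sum f N \<le> sum (f :: 'a \<Rightarrow> nat) V"
proof -
  define P where "P = (\<Union>h\<in>H. pendants H h)"
  have finH: "finite H" using H_sub finite_V finite_subset by blast
  have finN: "finite N" using finite_subset[OF assms] finite_V by simp
  have "(\<Sum>h\<in>H. f h + sum f (pendants H h)) + sum f N = sum f H + sum f P + sum f N"
    unfolding P_def using finH finite_pendants pendants_disjoint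
    by (simp add: sum.distrib sum.UNION_disjoint)
  also have "\<dots> = sum f (H \<union> P \<union> N)"
  proof -
    have "H \<inter> P = {}" "(H \<union> P) \<inter> N = {}"
      using assms unfolding P_def pendants_def by blast+
    moreover have "finite P" unfolding P_def using finH finite_pendants by blast
    ultimately show ?thesis using finH finN by (simp add: sum.union_disjoint)
  qed
  also have "\<dots> \<le> sum f V"
    using H_sub assms finite_V unfolding P_def pendants_def by (intro sum_mono2) auto
  finally show ?thesis .
qed

lemma CID_weight_ge_twice_card:
  assumes hall: "pendant_hall H" and f: "is_CID V E f"
  shows "2 * card H \<le> sum f V"
proof -
  define c where "c h = f h + sum f (pendants H h)" for h
  define I where "I = {h \<in> H. c h < 2}"
  define N where "N = {s \<in> V - H. \<not> leaf V E s \<and> (\<exists>h\<in>I. E h s)}"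
  have finH: "finite H" using H_sub finite_V finite_subset by blast
  have IH: "I \<subseteq> H" unfolding I_def by blast
  have I0: "f h = 0" if "h \<in> I" for h
    using light_pendant_charge(1)[OF f] that unfolding I_def c_def by blast
  have "card I \<le> card N"
  proof (cases "I = {}")
    case False
    have "independent E I"
      using f I0 IH H_sub unfolding is_CID_def independent_def by blast
    moreover have "I \<subseteq> {h \<in> H. card (pendants H h) = 1}"
      using light_pendant_charge(2)[OF f] unfolding I_def c_def by blast
    ultimately show ?thesis
      using hall[unfolded pendant_hall_def, rule_format, OF _ conjI] False unfolding N_def by blast
  qed simp
  also have "card N \<le> sum f N"
  proof -
    have "\<And>s. s \<in> N \<Longrightarrow> 1 \<le> f s"
      using is_CID_nbr_of_zero[OF f] I0 unfolding N_def by blast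
    then show ?thesis using sum_mono[of N "\<lambda>_. 1" f] by simp
  qed
  finally have IN: "card I \<le> sum f N" .
  have c_ge: "2 \<le> c h + (if h \<in> I then 1 else 0)" if "h \<in> H" for h
    using that light_pendant_charge(3)[OF f that] by (cases "c h < 2") (auto simp: I_def c_def)
  have "2 * card H = (\<Sum>h\<in>H. 2)" by simp
  also have "\<dots> \<le> (\<Sum>h\<in>H. c h + (if h \<in> I then 1 else 0))"
    using c_ge by (rule sum_mono)
  also have "\<dots> = (\<Sum>h\<in>H. c h) + card I"
    using finH IH by (simp add: sum.distrib sum.If_cases Int_absorb1)
  also have "\<dots> \<le> (\<Sum>h\<in>H. c h) + sum f N"
    using IN by simp
  also have "\<dots> \<le> sum f V"
    unfolding c_def N_def by (rule sum_charges_le) blast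
  finally show ?thesis .
qed

end

end

locale graph_without_isolated = simple_graph +
  assumes no_isolated: "v \<in> V \<Longrightarrow> \<exists>u. E v u"
begin

lemma cover_nbr: "vertex_cover V E C \<Longrightarrow> v \<in> V - C \<Longrightarrow> \<exists>u\<in>C. E v u"
  using no_isolated unfolding vertex_cover_def by blast

lemma is_CID_cover:
  assumes "vertex_cover V E C"
  shows "is_CID V E (two_one C {})"
proof (rule is_CID_two_one)
  fix v assume "v \<in> V" "v \<notin> C"
  then obtain u where "E v u" "u \<in> C" using cover_nbr[OF assms] by blast
  then show "2 \<le> sum (two_one C {}) (nbhd V E v)" by (rule two_one_nbhd_ge)
next
  show "independent E (V - C - {})" using independent_compl_cover[OF assms] by simp
qed

lemma gamma_cI_le_twice_vc_number: "gamma_cI V E \<le> 2 * vc_number V E"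
proof -
  obtain C where C: "vertex_cover V E C" "card C = vc_number V E"
    using vc_number_attained by blast
  have "sum (two_one C {}) V = 2 * card C"
    using C(1) finite_V unfolding vertex_cover_def by (subst sum_two_one) auto
  then show ?thesis using gamma_cI_le[OF is_CID_cover[OF C(1)]] C(2) by simp
qed

lemma in_family_G_imp_gamma_cI_eq:
  assumes "in_family_G V E"
  shows "gamma_cI V E = 2 * vc_number V E"
proof -
  obtain H where H: "H \<subseteq> V" "independent E (V - H)"
    and H_nbrs: "\<forall>h\<in>H. 2 \<le> card {s \<in> V - H. E h s} \<and> pendants H h \<noteq> {}"
    and hall: "pendant_hall H"
    using assms unfolding in_family_G_iff by blast
  have H_pendant: "\<And>h. h \<in> H \<Longrightarrow> pendants H h \<noteq> {}" using H_nbrs by blast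
  obtain f where f: "is_CID V E f" "sum f V = gamma_cI V E" using gamma_cI_attained by blast
  have "2 * card H \<le> sum f V" by (rule CID_weight_ge_twice_card[OF H H_pendant hall f(1)])
  then have "2 * vc_number V E \<le> gamma_cI V E"
    using vc_number_eq_card[OF H H_pendant] f(2) by simp
  then show ?thesis using gamma_cI_le_twice_vc_number by simp
qed

context
  fixes C :: "'a set"
  assumes cover: "vertex_cover V E C"
    and tight: "\<And>f. is_CID V E f \<Longrightarrow> 2 * card C \<le> sum f V"
begin

lemma two_one_swap_bound:
  assumes "X \<subseteq> C" "Y \<subseteq> V" "(C - X) \<inter> Y = {}"
    and "independent E (V - (C - X) - Y)"
    and "\<And>v. v \<in> V \<Longrightarrow> v \<notin> C - X \<Longrightarrow> v \<notin> Y \<Longrightarrow> 2 \<le> sum (two_one (C - X) Y) (nbhd V E v)"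
  shows "2 * card X \<le> card Y"
proof -
  have CV: "C \<subseteq> V" using cover unfolding vertex_cover_def by blast
  then have finC: "finite C" using finite_V finite_subset by blast
  have "2 * card C \<le> sum (two_one (C - X) Y) V"
    using assms(4,5) by (intro tight is_CID_two_one)
  also have "\<dots> = 2 * card (C - X) + card Y"
    using CV assms(2,3) finite_V by (intro sum_two_one) auto
  finally show ?thesis
    using card_Diff_subset[OF finite_subset[OF assms(1) finC] assms(1)] card_mono[OF finC assms(1)]
    by linarith
qed

lemma tight_cover_has_pendant:
  assumes h: "h \<in> C"
  shows "pendants C h \<noteq> {}"
proof
  assume none: "pendants C h = {}"
  have "2 * card {h} \<le> card {h}"
  proof (rule two_one_swap_bound)
    show "{h} \<subseteq> C" "{h} \<subseteq> V" "(C - {h}) \<inter> {h} = {}"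
      using h cover unfolding vertex_cover_def by auto
    have "V - (C - {h}) - {h} = V - C" using h by blast
    then show "independent E (V - (C - {h}) - {h})" using independent_compl_cover[OF cover] by simp
  next
    fix v assume v: "v \<in> V" "v \<notin> C - {h}" "v \<notin> {h}"
    then have vS: "v \<in> V - C" by blast
    obtain u where u: "u \<in> C" "E v u" using cover_nbr[OF cover vS] by blast
    have "\<exists>u'\<in>C - {h}. E v u'"
    proof (cases "u = h")
      case True
      have "v \<notin> pendants C h" using none by simp
      then have "\<not> leaf V E v" using vS edge_sym[OF u(2)] True unfolding pendants_def by simp
      then obtain u' where u': "E v u'" "u' \<noteq> h" using not_leaf_other_nbr[OF v(1) _ u(2)] True by blast
      have "u' \<in> C" using cover u'(1) vS unfolding vertex_cover_def by blast
      with u' show ?thesis by blast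
    next
      case False
      with u show ?thesis by blast
    qed
    then obtain u' where u': "u' \<in> C - {h}" "E v u'" by blast
    show "2 \<le> sum (two_one (C - {h}) {h}) (nbhd V E v)" by (rule two_one_nbhd_ge[OF u'(2,1)])
  qed
  then show False by simp
qed

lemma tight_cover_two_outer_nbrs:
  assumes conn: "connected_graph V E" and order: "card V \<ge> 3" and h: "h \<in> C"
  shows "2 \<le> card {s \<in> V - C. E h s}"
proof (rule ccontr)
  assume few: "\<not> 2 \<le> card {s \<in> V - C. E h s}"
  obtain s where s: "s \<in> V - C" "E h s" "leaf V E s"
    using tight_cover_has_pendant[OF h] unfolding pendants_def by blast
  have only_s: "y = s" if "y \<notin> C" "E h y" for y
  proof (rule ccontr)
    assume "y \<noteq> s"
    have "{s, y} \<subseteq> {s \<in> V - C. E h s}" using s that edge_in_V by blast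
    then have "card {s, y} \<le> card {s \<in> V - C. E h s}" using finite_V by (intro card_mono) auto
    with few \<open>y \<noteq> s\<close> show False by simp
  qed
  show False
  proof (cases "\<exists>u\<in>C. E h u")
    case True
    then obtain u where u: "u \<in> C" "E h u" by blast
    have "2 * card {h} \<le> card {s}"
    proof (rule two_one_swap_bound)
      show "{h} \<subseteq> C" "{s} \<subseteq> V" "(C - {h}) \<inter> {s} = {}" using h s(1) by auto
      show "independent E (V - (C - {h}) - {s})"
      proof (rule independent_swap[OF cover])
        show "{h} \<subseteq> C" "independent E {h}"
          using h edge_irrefl unfolding independent_def by auto
        show "\<And>x y. x \<in> {h} \<Longrightarrow> E x y \<Longrightarrow> y \<notin> C \<Longrightarrow> y \<in> {s}" using only_s by blast
      qed
    next
      fix v assume v: "v \<in> V" "v \<notin> C - {h}" "v \<notin> {s}"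
      show "2 \<le> sum (two_one (C - {h}) {s}) (nbhd V E v)"
      proof (cases "v = h")
        case True
        have "u \<noteq> h" using u(2) edge_irrefl by metis
        then show ?thesis using two_one_nbhd_ge[of v u "C - {h}" "{s}"] True u by simp
      next
        case False
        then have vS: "v \<in> V - C" using v by blast
        obtain w where w: "w \<in> C" "E v w" using cover_nbr[OF cover vS] by blast
        have "w \<noteq> h"
        proof
          assume "w = h"
          then have "v = s" using only_s[of v] vS edge_sym[OF w(2)] by simp
          then show False using v(3) by simp
        qed
        then show ?thesis using two_one_nbhd_ge[of v w "C - {h}" "{s}"] w by simp
      qed
    qed
    then show False by simp
  next
    case False
    then have "\<And>y. E h y \<Longrightarrow> y = s" using only_s by blast
    moreover have "\<And>y. E s y \<Longrightarrow> y = h" using leaf_unique_nbr[OF s(3) edge_sym[OF s(2)]] by blast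
    ultimately have "card V \<le> 2" by (rule connected_isolated_edge_card_le_2[OF conn s(2)])
    then show False using order by simp
  qed
qed

lemma tight_cover_pendant_hall:
  assumes conn: "connected_graph V E" and order: "card V \<ge> 3"
  shows "pendant_hall C"
  unfolding pendant_hall_def
proof (intro allI impI, elim conjE)
  fix I assume I: "I \<subseteq> {h \<in> C. card (pendants C h) = 1}" "I \<noteq> {}" "independent E I"
  define NS where "NS = {s \<in> V - C. \<exists>h\<in>I. E h s}"
  have IC: "I \<subseteq> C" using I(1) by blast
  have finI: "finite I"
    using IC cover finite_V finite_subset unfolding vertex_cover_def by metis
  have NS_le: "card NS \<le> card I + card {s \<in> V - C. \<not> leaf V E s \<and> (\<exists>h\<in>I. E h s)}"
    unfolding NS_def using I(1) by (intro card_outer_nbrs_le[OF finI]) blast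
  have "2 * card I \<le> card NS"
  proof (rule two_one_swap_bound)
    show "I \<subseteq> C" "NS \<subseteq> V" "(C - I) \<inter> NS = {}" using IC unfolding NS_def by auto
    show "independent E (V - (C - I) - NS)"
      using IC I(3) edge_in_V unfolding NS_def by (intro independent_swap[OF cover]) auto
  next
    fix v assume v: "v \<in> V" "v \<notin> C - I" "v \<notin> NS"
    show "2 \<le> sum (two_one (C - I) NS) (nbhd V E v)"
    proof (cases "v \<in> I")
      case True
      \<comment> \<open>the pendant leaf of v and a second neighbour outside C both carry weight 1\<close>
      then obtain l where l: "pendants C v = {l}" using I(1) by (auto simp: card_1_singleton_iff)
      then have l_out: "l \<in> V - C" "E v l" unfolding pendants_def by auto
      have two: "2 \<le> card {s \<in> V - C. E v s}"
        using tight_cover_two_outer_nbrs[OF conn order] IC True by blast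
      have "\<not> {s \<in> V - C. E v s} \<subseteq> {l}"
      proof
        assume "{s \<in> V - C. E v s} \<subseteq> {l}"
        from card_mono[OF _ this] have "card {s \<in> V - C. E v s} \<le> 1" by simp
        with two show False by simp
      qed
      then obtain s' where s': "s' \<in> V - C" "E v s'" "s' \<noteq> l" by blast
      have "l \<in> NS" "s' \<in> NS" using l_out s' True unfolding NS_def by auto
      then show ?thesis using two_one_nbhd_ge_pair l_out(2) s'(2,3) by blast
    next
      case False
      then have vS: "v \<in> V - C" using v by blast
      obtain w where "w \<in> C" "E v w" using cover_nbr[OF cover vS] by blast
      moreover have "w \<notin> I" using v(3) vS edge_sym \<open>E v w\<close> unfolding NS_def by blast
      ultimately show ?thesis using two_one_nbhd_ge by blast
    qed
  qed
  with NS_le show "card I \<le> card {s \<in> V - C. \<not> leaf V E s \<and> (\<exists>h\<in>I. E h s)}"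
    by linarith
qed

end

lemma gamma_cI_eq_imp_in_family_G:
  assumes conn: "connected_graph V E" and order: "card V \<ge> 3"
    and eq: "gamma_cI V E = 2 * vc_number V E"
  shows "in_family_G V E"
proof -
  obtain C where C: "vertex_cover V E C" "card C = vc_number V E"
    using vc_number_attained by blast
  have tight: "2 * card C \<le> sum f V" if "is_CID V E f" for f
    using gamma_cI_le[OF that] eq C(2) by simp
  have "C \<subseteq> V" using C(1) unfolding vertex_cover_def by blast
  moreover have "\<forall>h\<in>C. 2 \<le> card {s \<in> V - C. E h s} \<and> pendants C h \<noteq> {}"
    using tight_cover_two_outer_nbrs[OF C(1) tight conn order] tight_cover_has_pendant[OF C(1) tight]
    by blast
  ultimately show ?thesis
    unfolding in_family_G_iff
    using independent_compl_cover[OF C(1)] tight_cover_pendant_hall[OF C(1) tight conn order] by blast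
qed

end

theorem theorem5:
  fixes V :: "'a set" and E :: "'a \<Rightarrow> 'a \<Rightarrow> bool"
  assumes "graph V E" and "connected_graph V E" and "card V \<ge> 3"
  shows "gamma_cI V E = 2 * vc_number V E \<longleftrightarrow> in_family_G V E"
proof -
  interpret graph_without_isolated V E
    by unfold_locales (fact assms(1), rule connected_graph_no_isolated[OF assms(2,3)])
  show ?thesis
    using gamma_cI_eq_imp_in_family_G[OF assms(2,3)] in_family_G_imp_gamma_cI_eq by blast
qed

end
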